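(* Let $\varphi:\mathbb D\to G_2$ be a complex geodesic. Then exactly one of the following occurs: (i) $\varphi(\mathbb D)\cap S=\emptyset$; (ii) $\varphi(\mathbb D)\cap S$ consists of exactly one point; (iii) $\varphi(\mathbb D)=S$. Moreover, for each of (i), (ii), (iii) there exists a complex geodesic of $G_2$ satisfying it. *)

theory Defs
  imports "HOL-Analysis.Analysis"
begin

abbreviation disc :: "complex set" where "disc \<equiv> ball 0 1"

definition G2 :: "(complex \<times> complex) set" where
  "G2 = {(z1 + z2, z1 * z2) | z1 z2. z1 \<in> disc \<and> z2 \<in> disc}"

definition royal :: "(complex \<times> complex) set" where
  "royal = {(2 * l, l ^ 2) | l. l \<in> disc}"

definition holo2 :: "(complex \<times> complex \<Rightarrow> complex) \<Rightarrow> (complex \<times> complex) set \<Rightarrow> bool" where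
  "holo2 f U \<longleftrightarrow> (\<forall>z\<in>U. \<exists>a b. (f has_derivative (\<lambda>h. a * fst h + b * snd h)) (at z))"

definition poincare :: "complex \<Rightarrow> complex \<Rightarrow> real" where
  "poincare a b = artanh (cmod ((a - b) / (1 - cnj b * a)))"

definition carath :: "(complex \<times> complex) set \<Rightarrow> complex \<times> complex \<Rightarrow> complex \<times> complex \<Rightarrow> real" where
  "carath U z w = (SUP f \<in> {f. holo2 f U \<and> f ` U \<subseteq> disc}. poincare (f z) (f w))"

definition holo_disc_map :: "(complex \<Rightarrow> complex \<times> complex) \<Rightarrow> (complex \<times> complex) set \<Rightarrow> bool" where
  "holo_disc_map \<phi> U \<longleftrightarrow> (\<lambda>l. fst (\<phi> l)) holomorphic_on disc \<and> (\<lambda>l. snd (\<phi> l)) holomorphic_on disc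
     \<and> \<phi> ` disc \<subseteq> U"

definition complex_geodesic :: "(complex \<Rightarrow> complex \<times> complex) \<Rightarrow> (complex \<times> complex) set \<Rightarrow> bool" where
  "complex_geodesic \<phi> U \<longleftrightarrow> holo_disc_map \<phi> U \<and>
     (\<forall>l\<in>disc. \<forall>m\<in>disc. carath U (\<phi> l) (\<phi> m) = poincare l m)"

end

theory Submission
  imports Defs "HOL-Complex_Analysis.Complex_Analysis"
begin

(* If a holomorphic F : G2 -> D satisfies F o phi = id, then phi is a complex geodesic: by
   Schwarz-Pick no holomorphic f : G2 -> D can separate phi l and phi m by more than the
   Poincare distance of l and m, and F attains that bound. The left inverses s/2, p and
   (s - 2p)/(2 - s) give a geodesic onto the royal variety S = {(2l, l^2)}, the flat geodesic
   l |-> (0, l) meeting S only at the origin, and a geodesic missing S.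
   If a geodesic phi meets S at two points phi a and phi b, the self-maps s/2 o phi and
   (s - 2p)/(2 - s) o phi of the disc agree at a and b and preserve their Poincare distance,
   since S is itself a geodesic. By the equality case of Schwarz-Pick they are one and the same
   automorphism g of the disc; their equality means p = (s/2)^2, so phi = (2g, g^2) and
   phi(D) = S. *)

section \<open>The Schwarz-Pick lemma\<close>

lemma Moebius_function_in_disc: "w \<in> disc \<Longrightarrow> z \<in> disc \<Longrightarrow> Moebius_function t w z \<in> disc"
  using Moebius_function_norm_lt_1 by simp

lemma Moebius_function_inverse:
  "w \<in> disc \<Longrightarrow> z \<in> disc \<Longrightarrow> Moebius_function 0 (- w) (Moebius_function 0 w z) = z"
  by (rule Moebius_function_compose) auto

lemma Moebius_function_eq_0_iff:
  assumes "w \<in> disc" "z \<in> disc"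
  shows "Moebius_function 0 w z = 0 \<longleftrightarrow> z = w"
proof
  assume "Moebius_function 0 w z = 0"
  then have "z = Moebius_function 0 (- w) 0"
    using Moebius_function_inverse[OF assms] by simp
  then show "z = w"
    by (simp add: Moebius_function_of_zero)
qed (simp add: Moebius_function_eq_zero)

lemma poincare_eq_artanh_Moebius: "poincare a b = artanh (cmod (Moebius_function 0 b a))"
  by (simp add: poincare_def Moebius_function_simple)

lemma artanh_le_artanh_iff:
  fixes x y :: real
  assumes "\<bar>x\<bar> < 1" "\<bar>y\<bar> < 1"
  shows "artanh x \<le> artanh y \<longleftrightarrow> x \<le> y"
proof -
  have "0 < 1 - x" "0 < 1 - y"
    using assms by auto
  then have "(1 + x) / (1 - x) \<le> (1 + y) / (1 - y) \<longleftrightarrow> (1 + x) * (1 - y) \<le> (1 + y) * (1 - x)"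
    by (simp add: divide_le_eq le_divide_eq)
  also have "\<dots> \<longleftrightarrow> x \<le> y"
    by (simp add: algebra_simps)
  finally have "(1 + x) / (1 - x) \<le> (1 + y) / (1 - y) \<longleftrightarrow> x \<le> y" .
  moreover have "0 < (1 + x) / (1 - x)" "0 < (1 + y) / (1 - y)"
    using assms by auto
  ultimately show ?thesis
    by (simp add: artanh_def)
qed

lemma Moebius_conjugate_self_map:
  assumes hol: "f holomorphic_on disc" and maps: "f ` disc \<subseteq> disc" and b: "b \<in> disc"
  obtains g where "g holomorphic_on disc" "g 0 = 0" "\<And>z. cmod z < 1 \<Longrightarrow> cmod (g z) < 1"
    "\<And>z. z \<in> disc \<Longrightarrow> g (Moebius_function 0 b z) = Moebius_function 0 (f b) (f z)"
proof
  have fb: "f b \<in> disc"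
    using maps b by blast
  have inner: "Moebius_function 0 (- b) ` disc \<subseteq> disc"
    using Moebius_function_in_disc b by auto
  have "(f \<circ> Moebius_function 0 (- b)) holomorphic_on disc"
    using Moebius_function_holomorphic b by (intro holomorphic_on_compose_gen[OF _ hol inner]) auto
  moreover have "Moebius_function 0 (f b) holomorphic_on disc"
    using Moebius_function_holomorphic fb by simp
  moreover have "(f \<circ> Moebius_function 0 (- b)) ` disc \<subseteq> disc"
    using inner maps by (auto simp: image_comp[symmetric])
  ultimately have "(Moebius_function 0 (f b) \<circ> (f \<circ> Moebius_function 0 (- b))) holomorphic_on disc"
    by (rule holomorphic_on_compose_gen)
  then show "(\<lambda>z. Moebius_function 0 (f b) (f (Moebius_function 0 (- b) z))) holomorphic_on disc"
    by (simp add: o_def)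
  show "Moebius_function 0 (f b) (f (Moebius_function 0 (- b) 0)) = 0"
    by (simp add: Moebius_function_of_zero Moebius_function_eq_zero)
  show "cmod (Moebius_function 0 (f b) (f (Moebius_function 0 (- b) z))) < 1" if "cmod z < 1" for z
  proof -
    have "z \<in> disc"
      using that by simp
    then have "f (Moebius_function 0 (- b) z) \<in> disc"
      using inner maps by blast
    then show ?thesis
      using Moebius_function_in_disc[OF fb] by simp
  qed
  show "Moebius_function 0 (f b) (f (Moebius_function 0 (- b) (Moebius_function 0 b z)))
      = Moebius_function 0 (f b) (f z)" if "z \<in> disc" for z
    using Moebius_function_inverse[OF b that] by simp
qed

lemma Schwarz_Pick:
  assumes hol: "f holomorphic_on disc" and maps: "f ` disc \<subseteq> disc" and ab: "a \<in> disc" "b \<in> disc"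
  shows "poincare (f a) (f b) \<le> poincare a b"
proof -
  obtain g where g: "g holomorphic_on disc" "g 0 = 0" "\<And>z. cmod z < 1 \<Longrightarrow> cmod (g z) < 1"
    "\<And>z. z \<in> disc \<Longrightarrow> g (Moebius_function 0 b z) = Moebius_function 0 (f b) (f z)"
    using Moebius_conjugate_self_map[OF hol maps ab(2)] by blast
  have "Moebius_function 0 b a \<in> disc"
    by (intro Moebius_function_in_disc ab)
  then have "cmod (g (Moebius_function 0 b a)) \<le> cmod (Moebius_function 0 b a)"
    using Schwarz_Lemma(1)[OF g(1-3)] by simp
  moreover have "f a \<in> disc" "f b \<in> disc"
    using maps ab by blast+
  ultimately show ?thesis
    using ab g(4)
    by (simp add: poincare_eq_artanh_Moebius artanh_le_artanh_iff Moebius_function_norm_lt_1)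
qed

lemma Schwarz_Pick_equality:
  assumes hol: "f holomorphic_on disc" and maps: "f ` disc \<subseteq> disc" and ab: "a \<in> disc" "b \<in> disc"
    and "a \<noteq> b" and eq: "poincare (f a) (f b) = poincare a b"
  obtains c where "cmod c = 1"
    "\<And>z. z \<in> disc \<Longrightarrow> f z = Moebius_function 0 (- f b) (c * Moebius_function 0 b z)"
proof -
  obtain g where g: "g holomorphic_on disc" "g 0 = 0" "\<And>z. cmod z < 1 \<Longrightarrow> cmod (g z) < 1"
    "\<And>z. z \<in> disc \<Longrightarrow> g (Moebius_function 0 b z) = Moebius_function 0 (f b) (f z)"
    using Moebius_conjugate_self_map[OF hol maps ab(2)] by blast
  define \<xi> where "\<xi> = Moebius_function 0 b a"
  have \<xi>: "cmod \<xi> < 1" "\<xi> \<noteq> 0"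
    using ab \<open>a \<noteq> b\<close> Moebius_function_in_disc[OF ab(2,1)]
    by (simp_all add: \<xi>_def Moebius_function_eq_0_iff)
  have fab: "f a \<in> disc" "f b \<in> disc"
    using maps ab by blast+
  have "cmod (Moebius_function 0 (f b) (f a)) = cmod \<xi>"
    using eq Moebius_function_in_disc[OF fab(2,1)] Moebius_function_in_disc[OF ab(2,1)]
    by (simp add: \<xi>_def poincare_eq_artanh_Moebius order_eq_iff artanh_le_artanh_iff)
  then have "cmod (g \<xi>) = cmod \<xi>"
    using g(4)[OF ab(1)] by (simp add: \<xi>_def)
  then obtain c where c: "cmod c = 1" and gc: "\<And>z. cmod z < 1 \<Longrightarrow> g z = c * z"
    using Schwarz_Lemma(3)[OF g(1-3)] \<xi> by blast
  have "f z = Moebius_function 0 (- f b) (c * Moebius_function 0 b z)" if z: "z \<in> disc" for z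
  proof -
    have "c * Moebius_function 0 b z = Moebius_function 0 (f b) (f z)"
      using gc g(4)[OF z] Moebius_function_in_disc[OF ab(2) z] by simp
    moreover have "f z \<in> disc"
      using maps z by blast
    ultimately show ?thesis
      using Moebius_function_inverse[OF fab(2)] by simp
  qed
  with c that show ?thesis
    by blast
qed

lemma Schwarz_Pick_equality_surj:
  assumes "f holomorphic_on disc" "f ` disc \<subseteq> disc" "a \<in> disc" "b \<in> disc" "a \<noteq> b"
    and "poincare (f a) (f b) = poincare a b"
  shows "f ` disc = disc"
proof
  obtain c where c: "cmod c = 1"
    and f: "\<And>z. z \<in> disc \<Longrightarrow> f z = Moebius_function 0 (- f b) (c * Moebius_function 0 b z)"
    using Schwarz_Pick_equality[OF assms] by blast
  have fb: "f b \<in> disc"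
    using assms(2,4) by blast
  show "disc \<subseteq> f ` disc"
  proof
    fix y assume y: "y \<in> disc"
    define w where "w = Moebius_function 0 (f b) y / c"
    have w: "w \<in> disc"
      using Moebius_function_in_disc[OF fb y] c by (simp add: w_def norm_divide)
    define z where "z = Moebius_function 0 (- b) w"
    have z: "z \<in> disc"
      using assms(4) w by (simp add: z_def Moebius_function_norm_lt_1)
    have "Moebius_function 0 b z = w"
      using Moebius_function_inverse[of "- b" w] assms(4) w by (simp add: z_def)
    then have "f z = y"
      using f[OF z] c Moebius_function_inverse[OF fb y] by (auto simp: w_def)
    with z show "y \<in> f ` disc"
      by blast
  qed
qed (fact assms)

lemma Schwarz_Pick_equality_unique:
  assumes f: "f holomorphic_on disc" "f ` disc \<subseteq> disc"
    and g: "g holomorphic_on disc" "g ` disc \<subseteq> disc"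
    and ab: "a \<in> disc" "b \<in> disc" "a \<noteq> b" and fga: "f a = g a" and fgb: "f b = g b"
    and eq: "poincare (f a) (f b) = poincare a b" and z: "z \<in> disc"
  shows "f z = g z"
proof -
  obtain c where c: "cmod c = 1"
    and fc: "\<And>z. z \<in> disc \<Longrightarrow> f z = Moebius_function 0 (- f b) (c * Moebius_function 0 b z)"
    using Schwarz_Pick_equality[OF f ab eq] by blast
  have "poincare (g a) (g b) = poincare a b"
    using eq fga fgb by simp
  then obtain d where d: "cmod d = 1"
    and gd: "\<And>z. z \<in> disc \<Longrightarrow> g z = Moebius_function 0 (- f b) (d * Moebius_function 0 b z)"
    using Schwarz_Pick_equality[OF g ab] fgb by metis
  define \<xi> where "\<xi> = Moebius_function 0 b a"
  have \<xi>: "cmod \<xi> < 1" "\<xi> \<noteq> 0"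
    using ab Moebius_function_in_disc[OF ab(2,1)] by (simp_all add: \<xi>_def Moebius_function_eq_0_iff)
  have "f b \<in> disc"
    using f(2) ab(2) by blast
  then have fb: "- f b \<in> disc"
    by simp
  have "c * \<xi> \<in> disc" "d * \<xi> \<in> disc"
    using \<xi> c d by (simp_all add: norm_mult)
  moreover have "Moebius_function 0 (- f b) (c * \<xi>) = Moebius_function 0 (- f b) (d * \<xi>)"
    using fc[OF ab(1)] gd[OF ab(1)] fga by (simp add: \<xi>_def)
  ultimately have "c * \<xi> = d * \<xi>"
    using Moebius_function_inverse[OF fb] by (metis minus_minus)
  then have "c = d"
    using \<xi>(2) by simp
  then show ?thesis
    using fc[OF z] gd[OF z] by simp
qed

section \<open>Left inverses and complex geodesics\<close>

lemma holo2_compose_holo_disc_map: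
  assumes F: "holo2 F U" and \<phi>: "holo_disc_map \<phi> U"
  shows "(\<lambda>l. F (\<phi> l)) holomorphic_on disc"
  unfolding holomorphic_on_open[OF open_ball]
proof
  fix l :: complex assume l: "l \<in> disc"
  obtain d1 d2 where d1: "((\<lambda>l. fst (\<phi> l)) has_field_derivative d1) (at l)"
    and d2: "((\<lambda>l. snd (\<phi> l)) has_field_derivative d2) (at l)"
    using \<phi> l unfolding holo_disc_map_def holomorphic_on_open[OF open_ball] by blast
  obtain A B where AB: "(F has_derivative (\<lambda>h. A * fst h + B * snd h)) (at (\<phi> l))"
    using F \<phi> l unfolding holo2_def holo_disc_map_def by blast
  have "((\<lambda>l. (fst (\<phi> l), snd (\<phi> l))) has_derivative (\<lambda>h. (d1 * h, d2 * h))) (at l)"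
    using d1 d2
    by (intro has_derivative_Pair) (simp_all add: has_field_derivative_imp_has_derivative)
  then have "(\<phi> has_derivative (\<lambda>h. (d1 * h, d2 * h))) (at l)"
    by simp
  from diff_chain_at[OF this AB]
  have "((\<lambda>l. F (\<phi> l)) has_derivative (\<lambda>h. (A * d1 + B * d2) * h)) (at l)"
    by (simp add: o_def algebra_simps)
  then have "((\<lambda>l. F (\<phi> l)) has_field_derivative (A * d1 + B * d2)) (at l)"
    by (simp add: has_field_derivative_def)
  then show "\<exists>f'. ((\<lambda>l. F (\<phi> l)) has_field_derivative f') (at l)"
    by blast
qed

lemma holo2_fst_half: "holo2 (\<lambda>x. fst x / 2) U"
  unfolding holo2_def
  by (intro ballI exI[of _ "1/2"] exI[of _ 0]) (auto intro!: derivative_eq_intros)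

lemma holo2_snd: "holo2 snd U"
  unfolding holo2_def
  by (intro ballI exI[of _ 0] exI[of _ 1]) (auto intro!: derivative_eq_intros)

lemma poincare_holo2_compose_le:
  assumes "holo2 F U" "F ` U \<subseteq> disc" and \<phi>: "holo_disc_map \<phi> U" and "l \<in> disc" "m \<in> disc"
  shows "poincare (F (\<phi> l)) (F (\<phi> m)) \<le> poincare l m"
proof (rule Schwarz_Pick)
  show "(\<lambda>l. F (\<phi> l)) holomorphic_on disc"
    using assms(1) \<phi> by (rule holo2_compose_holo_disc_map)
  show "(\<lambda>l. F (\<phi> l)) ` disc \<subseteq> disc"
    using assms(2) \<phi> by (auto simp: holo_disc_map_def)
qed fact+

lemma complex_geodesic_if_left_inverse:
  assumes \<phi>: "holo_disc_map \<phi> U" and F: "holo2 F U" "F ` U \<subseteq> disc"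
    and inverse: "\<And>l. l \<in> disc \<Longrightarrow> F (\<phi> l) = l"
  shows "complex_geodesic \<phi> U"
  unfolding complex_geodesic_def
proof (intro conjI \<phi> ballI)
  fix l m assume lm: "l \<in> disc" "m \<in> disc"
  define \<F> where "\<F> = {f. holo2 f U \<and> f ` U \<subseteq> disc}"
  have "F \<in> \<F>"
    using F by (simp add: \<F>_def)
  have bound: "poincare (f (\<phi> l)) (f (\<phi> m)) \<le> poincare l m" if "f \<in> \<F>" for f
    using that \<phi> lm by (intro poincare_holo2_compose_le) (auto simp: \<F>_def)
  show "carath U (\<phi> l) (\<phi> m) = poincare l m"
    unfolding carath_def \<F>_def[symmetric]
  proof (rule antisym)
    show "(SUP f\<in>\<F>. poincare (f (\<phi> l)) (f (\<phi> m))) \<le> poincare l m"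
      using \<open>F \<in> \<F>\<close> bound by (intro cSUP_least) auto
    have "poincare l m = poincare (F (\<phi> l)) (F (\<phi> m))"
      using inverse lm by simp
    also have "\<dots> \<le> (SUP f\<in>\<F>. poincare (f (\<phi> l)) (f (\<phi> m)))"
      using \<open>F \<in> \<F>\<close> bound by (intro cSUP_upper bdd_aboveI2) auto
    finally show "poincare l m \<le> (SUP f\<in>\<F>. poincare (f (\<phi> l)) (f (\<phi> m)))" .
  qed
qed

section \<open>The symmetrized bidisc and three of its geodesics\<close>

lemma G2I: "z1 \<in> disc \<Longrightarrow> z2 \<in> disc \<Longrightarrow> (z1 + z2, z1 * z2) \<in> G2"
  unfolding G2_def by blast

lemma G2E:
  assumes "x \<in> G2"
  obtains z1 z2 where "z1 \<in> disc" "z2 \<in> disc" "x = (z1 + z2, z1 * z2)"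
  using assms unfolding G2_def by blast

lemma G2_fst_half_in_disc: "x \<in> G2 \<Longrightarrow> fst x / 2 \<in> disc"
proof (elim G2E)
  fix z1 z2 assume "z1 \<in> disc" "z2 \<in> disc" "x = (z1 + z2, z1 * z2)"
  moreover have "cmod (z1 + z2) \<le> cmod z1 + cmod z2"
    by (rule norm_triangle_ineq)
  ultimately show "fst x / 2 \<in> disc"
    by (simp add: norm_divide)
qed

lemma G2_snd_in_disc: "x \<in> G2 \<Longrightarrow> snd x \<in> disc"
proof (elim G2E)
  fix z1 z2 assume z: "z1 \<in> disc" "z2 \<in> disc" and "x = (z1 + z2, z1 * z2)"
  moreover have "cmod z1 * cmod z2 < 1 * 1"
    using z by (intro mult_strict_mono) auto
  ultimately show "snd x \<in> disc"
    by (simp add: norm_mult)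
qed

lemma G2_fst_neq_2: "x \<in> G2 \<Longrightarrow> fst x \<noteq> 2"
  using G2_fst_half_in_disc by fastforce

(* Minus the Agler-Young function Phi_1 (s, p) = (2p - s)/(2 - s), so that it inverts
   royal_param. *)
definition Phi :: "complex \<times> complex \<Rightarrow> complex" where
  "Phi x = (fst x - 2 * snd x) / (2 - fst x)"

lemma Phi_norm_identity:
  fixes z1 z2 :: complex
  shows "(cmod (2 - (z1 + z2)))\<^sup>2 - (cmod (z1 + z2 - 2 * (z1 * z2)))\<^sup>2
    = 2 * ((1 - (cmod z1)\<^sup>2) * (cmod (1 - z2))\<^sup>2 + (1 - (cmod z2)\<^sup>2) * (cmod (1 - z1))\<^sup>2)"
  by (simp add: cmod_power2) (simp add: power2_eq_square algebra_simps)

lemma Phi_in_disc: "x \<in> G2 \<Longrightarrow> Phi x \<in> disc"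
proof (elim G2E)
  fix z1 z2 assume z: "z1 \<in> disc" "z2 \<in> disc" and x: "x = (z1 + z2, z1 * z2)"
  have "0 < 1 - (cmod z1)\<^sup>2" "0 < (cmod (1 - z2))\<^sup>2" "0 \<le> 1 - (cmod z2)\<^sup>2"
    using z by (auto simp: abs_square_less_1 abs_square_le_1)
  then have "(cmod (z1 + z2 - 2 * (z1 * z2)))\<^sup>2 < (cmod (2 - (z1 + z2)))\<^sup>2"
    using Phi_norm_identity[of z1 z2]
    by (smt (verit) mult_nonneg_nonneg mult_pos_pos zero_le_power2)
  then have "cmod (z1 + z2 - 2 * (z1 * z2)) < cmod (2 - (z1 + z2))"
    by (rule power_less_imp_less_base) simp
  then show "Phi x \<in> disc"
    by (simp add: Phi_def x norm_divide divide_less_eq)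
qed

lemma holo2_Phi: "holo2 Phi G2"
  unfolding holo2_def
proof
  fix x assume "x \<in> G2"
  then have "2 - fst x \<noteq> 0"
    using G2_fst_neq_2 by simp
  then have "(Phi has_derivative
      (\<lambda>h. (2 - 2 * snd x) / (2 - fst x)\<^sup>2 * fst h + (- 2 / (2 - fst x)) * snd h)) (at x)"
    unfolding Phi_def[abs_def]
    by (auto intro!: derivative_eq_intros simp: fun_eq_iff divide_simps)
      (simp add: algebra_simps power2_eq_square)
  then show "\<exists>a b. (Phi has_derivative (\<lambda>h. a * fst h + b * snd h)) (at x)"
    by blast
qed

definition royal_param :: "complex \<Rightarrow> complex \<times> complex" where
  "royal_param l = (2 * l, l\<^sup>2)"

lemma royal_eq_image: "royal = royal_param ` disc"
  unfolding royal_def royal_param_def by auto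

lemma royal_param_in_G2: "l \<in> disc \<Longrightarrow> royal_param l \<in> G2"
  using G2I[of l l] by (simp add: royal_param_def power2_eq_square)

lemma complex_geodesic_royal_param: "complex_geodesic royal_param G2"
proof (rule complex_geodesic_if_left_inverse[OF _ holo2_fst_half])
  show "holo_disc_map royal_param G2"
    unfolding holo_disc_map_def using royal_param_in_G2
    by (auto intro!: holomorphic_intros simp: royal_param_def)
  show "(\<lambda>x. fst x / 2) ` G2 \<subseteq> disc"
    using G2_fst_half_in_disc by auto
qed (simp add: royal_param_def)

lemma Phi_royal_param:
  assumes "l \<in> disc"
  shows "Phi (royal_param l) = l"
proof -
  have "l \<noteq> 1"
    using assms by auto
  then show ?thesis
    by (simp add: Phi_def royal_param_def field_simps power2_eq_square)
qed

lemma eq_royal_param_if_Phi_eq: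
  assumes "x \<in> G2" "Phi x = fst x / 2"
  shows "x = royal_param (fst x / 2)"
proof -
  have "2 - fst x \<noteq> 0"
    using G2_fst_neq_2[OF assms(1)] by simp
  then have "snd x = (fst x / 2)\<^sup>2"
    using assms(2) by (simp add: Phi_def field_simps power2_eq_square)
  then show ?thesis
    by (simp add: royal_param_def prod_eq_iff)
qed

lemma royal_ne_empty: "royal \<noteq> {}"
  unfolding royal_eq_image by simp

lemma royal_ne_singleton: "royal \<noteq> {p}"
proof
  assume "royal = {p}"
  moreover have "royal_param 0 \<in> royal" "royal_param (1/2) \<in> royal"
    unfolding royal_eq_image by (intro imageI; simp)+
  ultimately have "royal_param 0 = royal_param (1/2)"
    by (metis singletonD)
  then show False
    by (simp add: royal_param_def)
qed

lemma complex_geodesic_flat: "complex_geodesic (\<lambda>l. (0, l)) G2"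
proof (rule complex_geodesic_if_left_inverse[OF _ holo2_snd])
  have "(0, l) \<in> G2" if "l \<in> disc" for l
  proof -
    define w where "w = csqrt (- l)"
    have "w \<in> disc" "- w \<in> disc"
      using that by (simp_all add: w_def)
    moreover have "w * - w = l"
      using power2_csqrt[of "- l"] by (simp add: w_def power2_eq_square)
    ultimately show ?thesis
      using G2I[of w "- w"] by simp
  qed
  then show "holo_disc_map (\<lambda>l. (0, l)) G2"
    by (auto simp: holo_disc_map_def)
  show "snd ` G2 \<subseteq> disc"
    using G2_snd_in_disc by auto
qed simp

lemma flat_inter_royal: "(\<lambda>l. (0, l)) ` disc \<inter> royal = {(0, 0)}"
  by (force simp: royal_eq_image royal_param_def)

(* Phi (z1 + z2, z1 * z2) = l means z2 = (2l - (1 + l) z1)/(1 + l - 2 z1); the roots for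
   omega = i and omega = -i are a solution of this in the disc whose two roots never coincide. *)
definition royal_avoiding_root :: "complex \<Rightarrow> complex \<Rightarrow> complex" where
  "royal_avoiding_root \<omega> l = (\<omega> * (1 - l) + 2 * l) / (2 + \<omega> * (1 - l))"

definition royal_avoiding_geodesic :: "complex \<Rightarrow> complex \<times> complex" where
  "royal_avoiding_geodesic l =
    (royal_avoiding_root \<i> l + royal_avoiding_root (- \<i>) l,
     royal_avoiding_root \<i> l * royal_avoiding_root (- \<i>) l)"

lemma royal_avoiding_root_norm_less:
  assumes "\<omega> \<in> {\<i>, - \<i>}" "l \<in> disc"
  shows "cmod (\<omega> * (1 - l) + 2 * l) < cmod (2 + \<omega> * (1 - l))"
proof -
  have "(cmod (2 + \<omega> * (1 - l)))\<^sup>2 - (cmod (\<omega> * (1 - l) + 2 * l))\<^sup>2 = 4 * (1 - (cmod l)\<^sup>2)"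
    using assms(1) by (auto simp: cmod_power2) (simp_all add: power2_eq_square algebra_simps)
  moreover have "(cmod l)\<^sup>2 < 1"
    using assms(2) by (simp add: abs_square_less_1)
  ultimately have "(cmod (\<omega> * (1 - l) + 2 * l))\<^sup>2 < (cmod (2 + \<omega> * (1 - l)))\<^sup>2"
    by simp
  then show ?thesis
    by (rule power_less_imp_less_base) simp
qed

lemma royal_avoiding_root_denom_nonzero: "\<omega> \<in> {\<i>, - \<i>} \<Longrightarrow> l \<in> disc \<Longrightarrow> 2 + \<omega> * (1 - l) \<noteq> 0"
  using royal_avoiding_root_norm_less by fastforce

lemma royal_avoiding_root_in_disc: "\<omega> \<in> {\<i>, - \<i>} \<Longrightarrow> l \<in> disc \<Longrightarrow> royal_avoiding_root \<omega> l \<in> disc"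
  using royal_avoiding_root_norm_less royal_avoiding_root_denom_nonzero
  by (simp add: royal_avoiding_root_def norm_divide divide_less_eq)

lemma royal_avoiding_root_holomorphic: "\<omega> \<in> {\<i>, - \<i>} \<Longrightarrow> royal_avoiding_root \<omega> holomorphic_on disc"
  unfolding royal_avoiding_root_def[abs_def]
  by (intro holomorphic_intros) (use royal_avoiding_root_denom_nonzero in blast)

lemma royal_avoiding_geodesic_in_G2: "l \<in> disc \<Longrightarrow> royal_avoiding_geodesic l \<in> G2"
  unfolding royal_avoiding_geodesic_def by (intro G2I royal_avoiding_root_in_disc) auto

lemma Phi_royal_avoiding_geodesic:
  assumes "l \<in> disc"
  shows "Phi (royal_avoiding_geodesic l) = l"
proof -
  define n1 d1 n2 d2 where "n1 = \<i> * (1 - l) + 2 * l" and "d1 = 2 + \<i> * (1 - l)"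
    and "n2 = - \<i> * (1 - l) + 2 * l" and "d2 = 2 + - \<i> * (1 - l)"
  have d: "d1 \<noteq> 0" "d2 \<noteq> 0"
    unfolding d1_def d2_def using assms by (intro royal_avoiding_root_denom_nonzero; simp)+
  have x: "royal_avoiding_geodesic l = (n1 / d1 + n2 / d2, n1 / d1 * (n2 / d2))"
    by (simp add: royal_avoiding_geodesic_def royal_avoiding_root_def n1_def d1_def n2_def d2_def)
  have "n1 / d1 + n2 / d2 - 2 * (n1 / d1 * (n2 / d2))
      = (n1 * d2 + n2 * d1 - 2 * n1 * n2) / (d1 * d2)"
    using d by (simp add: field_simps)
  also have "n1 * d2 + n2 * d1 - 2 * n1 * n2 = l * (2 * d1 * d2 - n1 * d2 - n2 * d1)"
    by (simp add: n1_def d1_def n2_def d2_def algebra_simps power2_eq_square)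
  also have "l * (2 * d1 * d2 - n1 * d2 - n2 * d1) / (d1 * d2) = l * (2 - (n1 / d1 + n2 / d2))"
    using d by (simp add: field_simps)
  finally have "n1 / d1 + n2 / d2 - 2 * (n1 / d1 * (n2 / d2)) = l * (2 - (n1 / d1 + n2 / d2))" .
  moreover have "2 - fst (royal_avoiding_geodesic l) \<noteq> 0"
    using G2_fst_neq_2[OF royal_avoiding_geodesic_in_G2[OF assms]] by simp
  ultimately show ?thesis
    by (simp add: Phi_def x)
qed

lemma royal_avoiding_roots_distinct:
  assumes "l \<in> disc"
  shows "royal_avoiding_root \<i> l \<noteq> royal_avoiding_root (- \<i>) l"
proof
  define n1 d1 n2 d2 where "n1 = \<i> * (1 - l) + 2 * l" and "d1 = 2 + \<i> * (1 - l)"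
    and "n2 = - \<i> * (1 - l) + 2 * l" and "d2 = 2 + - \<i> * (1 - l)"
  have "d1 \<noteq> 0" "d2 \<noteq> 0"
    unfolding d1_def d2_def using assms by (intro royal_avoiding_root_denom_nonzero; simp)+
  moreover assume "royal_avoiding_root \<i> l = royal_avoiding_root (- \<i>) l"
  ultimately have "n1 * d2 - n2 * d1 = 0"
    by (simp add: royal_avoiding_root_def n1_def d1_def n2_def d2_def frac_eq_eq)
  moreover have "n1 * d2 - n2 * d1 = 4 * \<i> * (1 - l)\<^sup>2"
    by (simp add: n1_def d1_def n2_def d2_def algebra_simps power2_eq_square)
  moreover have "l \<noteq> 1"
    using assms by auto
  ultimately show False
    by simp
qed

lemma complex_geodesic_royal_avoiding: "complex_geodesic royal_avoiding_geodesic G2"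
proof (rule complex_geodesic_if_left_inverse[OF _ holo2_Phi])
  show "holo_disc_map royal_avoiding_geodesic G2"
    unfolding holo_disc_map_def using royal_avoiding_geodesic_in_G2 royal_avoiding_root_holomorphic
    by (auto intro!: holomorphic_intros simp: royal_avoiding_geodesic_def)
  show "Phi ` G2 \<subseteq> disc"
    using Phi_in_disc by auto
qed (rule Phi_royal_avoiding_geodesic)

lemma royal_avoiding_geodesic_inter_royal: "royal_avoiding_geodesic ` disc \<inter> royal = {}"
proof (rule ccontr)
  assume "royal_avoiding_geodesic ` disc \<inter> royal \<noteq> {}"
  then obtain l m where l: "l \<in> disc" and lm: "royal_avoiding_geodesic l = royal_param m"
    unfolding royal_eq_image by blast
  define z1 z2 where "z1 = royal_avoiding_root \<i> l" and "z2 = royal_avoiding_root (- \<i>) l"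
  have "z1 + z2 = 2 * m" "z1 * z2 = m\<^sup>2"
    using lm by (simp_all add: royal_avoiding_geodesic_def royal_param_def z1_def z2_def)
  moreover have "(z1 - z2)\<^sup>2 = (z1 + z2)\<^sup>2 - 4 * (z1 * z2)"
    by (simp add: power2_eq_square algebra_simps)
  ultimately have "(z1 - z2)\<^sup>2 = 0"
    by (simp add: power_mult_distrib)
  then show False
    using royal_avoiding_roots_distinct[OF l] by (simp add: z1_def z2_def)
qed

section \<open>Geodesics through two points of the royal variety\<close>

lemma complex_geodesic_royal_points_poincare:
  assumes geo: "complex_geodesic \<phi> G2" and "a \<in> disc" "b \<in> disc" "\<alpha> \<in> disc" "\<beta> \<in> disc"
    and "\<phi> a = royal_param \<alpha>" "\<phi> b = royal_param \<beta>"
  shows "poincare \<alpha> \<beta> = poincare a b"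
proof -
  have "poincare \<alpha> \<beta> = carath G2 (royal_param \<alpha>) (royal_param \<beta>)"
    using complex_geodesic_royal_param assms(4,5) unfolding complex_geodesic_def by simp
  also have "\<dots> = carath G2 (\<phi> a) (\<phi> b)"
    using assms(6,7) by simp
  also have "\<dots> = poincare a b"
    using geo assms(2,3) unfolding complex_geodesic_def by blast
  finally show ?thesis .
qed

lemma complex_geodesic_two_royal_points:
  assumes geo: "complex_geodesic \<phi> G2" and ab: "a \<in> disc" "b \<in> disc"
    and royal: "\<phi> a \<in> royal" "\<phi> b \<in> royal" and "\<phi> a \<noteq> \<phi> b"
  shows "\<phi> ` disc = royal"
proof -
  have \<phi>: "holo_disc_map \<phi> G2" and in_G2: "\<And>l. l \<in> disc \<Longrightarrow> \<phi> l \<in> G2"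
    using geo by (auto simp: complex_geodesic_def holo_disc_map_def)
  obtain \<alpha> \<beta> where \<alpha>\<beta>: "\<alpha> \<in> disc" "\<beta> \<in> disc" and "\<phi> a = royal_param \<alpha>" "\<phi> b = royal_param \<beta>"
    using royal unfolding royal_eq_image by blast
  define g where "g = (\<lambda>l. fst (\<phi> l) / 2)"
  define h where "h = (\<lambda>l. Phi (\<phi> l))"
  have g: "g holomorphic_on disc" "g ` disc \<subseteq> disc"
    unfolding g_def
    using holo2_compose_holo_disc_map[OF holo2_fst_half \<phi>] G2_fst_half_in_disc[OF in_G2] by blast+
  have h: "h holomorphic_on disc" "h ` disc \<subseteq> disc"
    unfolding h_def using holo2_compose_holo_disc_map[OF holo2_Phi \<phi>] Phi_in_disc[OF in_G2]
    by blast+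
  have ga: "g a = \<alpha>" "h a = \<alpha>" and gb: "g b = \<beta>" "h b = \<beta>"
    using \<open>\<phi> a = royal_param \<alpha>\<close> \<open>\<phi> b = royal_param \<beta>\<close>
      Phi_royal_param[OF \<alpha>\<beta>(1)] Phi_royal_param[OF \<alpha>\<beta>(2)]
    by (simp_all add: g_def h_def royal_param_def)
  have "a \<noteq> b"
    using \<open>\<phi> a \<noteq> \<phi> b\<close> by blast
  have isometric: "poincare (g a) (g b) = poincare a b"
    using complex_geodesic_royal_points_poincare[OF geo ab \<alpha>\<beta>] ga gb
      \<open>\<phi> a = royal_param \<alpha>\<close> \<open>\<phi> b = royal_param \<beta>\<close> by simp
  have "\<phi> l = royal_param (g l)" if "l \<in> disc" for l
  proof -
    have "g l = h l"
      using ga gb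
      by (intro Schwarz_Pick_equality_unique[OF g h ab \<open>a \<noteq> b\<close> _ _ isometric that]) simp_all
    then show ?thesis
      using eq_royal_param_if_Phi_eq[OF in_G2[OF that]] by (simp add: g_def h_def)
  qed
  then have "\<phi> ` disc = royal_param ` g ` disc"
    by (simp add: image_image)
  also have "g ` disc = disc"
    using Schwarz_Pick_equality_surj[OF g ab \<open>a \<noteq> b\<close> isometric] .
  finally show ?thesis
    by (simp add: royal_eq_image)
qed

lemma complex_geodesic_inter_royal_cases:
  assumes "complex_geodesic \<phi> G2"
  shows "\<phi> ` disc \<inter> royal = {} \<or> (\<exists>p. \<phi> ` disc \<inter> royal = {p}) \<or> \<phi> ` disc = royal"
proof (rule ccontr)
  assume not_cases: "\<not> ?thesis"
  then obtain x where x: "x \<in> \<phi> ` disc \<inter> royal"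
    by blast
  moreover have "\<phi> ` disc \<inter> royal \<noteq> {x}"
    using not_cases by blast
  ultimately obtain y where y: "y \<in> \<phi> ` disc \<inter> royal" "y \<noteq> x"
    by blast
  obtain a b where ab: "a \<in> disc" "b \<in> disc" and "\<phi> a = x" "\<phi> b = y"
    using x y by blast
  with x y have "\<phi> a \<in> royal" "\<phi> b \<in> royal" "\<phi> a \<noteq> \<phi> b"
    by auto
  then have "\<phi> ` disc = royal"
    by (rule complex_geodesic_two_royal_points[OF assms ab])
  with not_cases show False
    by blast
qed

theorem corollary4:
  shows "(\<forall>\<phi>. complex_geodesic \<phi> G2 \<longrightarrow>
           ((\<phi> ` disc \<inter> royal = {} \<and> \<not> (\<exists>p. \<phi> ` disc \<inter> royal = {p}) \<and> \<phi> ` disc \<noteq> royal) \<or>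
            (\<phi> ` disc \<inter> royal \<noteq> {} \<and> (\<exists>p. \<phi> ` disc \<inter> royal = {p}) \<and> \<phi> ` disc \<noteq> royal) \<or>
            (\<phi> ` disc \<inter> royal \<noteq> {} \<and> \<not> (\<exists>p. \<phi> ` disc \<inter> royal = {p}) \<and> \<phi> ` disc = royal)))
       \<and> (\<exists>\<phi>. complex_geodesic \<phi> G2 \<and> \<phi> ` disc \<inter> royal = {})
       \<and> (\<exists>\<phi>. complex_geodesic \<phi> G2 \<and> (\<exists>p. \<phi> ` disc \<inter> royal = {p}))
       \<and> (\<exists>\<phi>. complex_geodesic \<phi> G2 \<and> \<phi> ` disc = royal)"
  apply (intro conjI allI impI)
  subgoal for \<phi>
    using complex_geodesic_inter_royal_cases[of \<phi>] royal_ne_empty royal_ne_singleton by auto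
  subgoal
    using complex_geodesic_royal_avoiding royal_avoiding_geodesic_inter_royal by blast
  subgoal
    using complex_geodesic_flat flat_inter_royal by blast
  subgoal
    using complex_geodesic_royal_param royal_eq_image by blast
  done

end
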